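(* Let $G:\mathbb{R}_+\to\mathbb{R}_+$ be of the form \[ G(z)=c\,\mathbf{1}[z>0]+\gamma_0 z+\int_{(0,\infty)}(1-e^{-rz})\,\nu(dr), \] where $c,\gamma_0\ge 0$ and $\nu$ is a non-negative measure on $(0,\infty)$ with $\int_{(0,\infty)}\min\{r,1\}\,\nu(dr)<\infty$. Then there exists a deterministic function $\ell_G:(0,\infty)\times(0,1)\to\mathbb{R}_+$ satisfying: (i) (2D-monotonicity) for all $a\le a'$ and $b\le b'$ in its domain, $\ell_G(a,b)\le \ell_G(a',b')$; (ii) ($G$-transformation) for every $\lambda>0$, if $Y\sim\mathrm{Exp}(\lambda)$ and $U\sim\mathrm{Uniform}(0,1)$ are independent, then $\ell_G(Y,U)\sim\mathrm{Exp}(G(\lambda))$.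
   Context: $\mathbb{R}_+$ denotes the non-negative reals. $\mathrm{Exp}(\lambda)$ denotes the exponential distribution with rate $\lambda$ (CDF $1-e^{-\lambda x}$). $\mathbf{1}[\cdot]$ is the indicator function. *)

theory Defs
  imports "HOL-Probability.Probability"
begin

text \<open>The Bernstein-type function
  G(z) = c 1[z>0] + gamma0 z + integral over (0,oo) of (1 - exp(-r z)) nu(dr).
  The measure nu is a measure on the Borel sets of the reals carried by (0,oo).\<close>
definition G_fun :: "real \<Rightarrow> real \<Rightarrow> real measure \<Rightarrow> real \<Rightarrow> real" where
  "G_fun c \<gamma>0 \<nu> z =
     c * (if z > 0 then 1 else 0) + \<gamma>0 * z + (\<integral>r. (1 - exp (- r * z)) \<partial>\<nu>)"

definition Exp_measure :: "real \<Rightarrow> real measure" where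
  "Exp_measure l = density lborel (exponential_density l)"

definition Unif01 :: "real measure" where
  "Unif01 = uniform_measure lborel {0<..<1}"

end

theory Submission
  imports Defs
begin

(* Let X be a subordinator with drift \<gamma>0 and Levy measure \<nu>, killed at an independent
   Exp(c) time \<zeta>, and let H t y = P(\<zeta> > t, X t \<le> y). For Y ~ Exp(\<lambda>) independent of X,
   integrating H t over Y gives P(\<zeta> > t) E(exp (- \<lambda> X t)) = exp (- t G(\<lambda>)).
   Since H is increasing in y and decreasing in t, the randomised inverse
   \<ell>(y, u) = sup {t \<ge> 0. H t y > 1 - u} is monotone in both arguments, and for U uniform
   on (0,1) independent of Y, P(\<ell>(Y, U) > x) = E(H (x+) Y) = exp (- x G(\<lambda>)).
   X is built explicitly as a countable sum of independent compound Poisson sums, one for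
   each unit time slot (j, j + 1] and each band of jump sizes, (1, \<infinity>) or (1/(k+1), 1/k]. *)

section \<open>Exponential and uniform laws\<close>

lemma prob_space_Exp_measure: "0 < l \<Longrightarrow> prob_space (Exp_measure l)"
  unfolding Exp_measure_def by (rule prob_space_exponential_density)

lemma sets_Exp_measure [simp, measurable_cong]: "sets (Exp_measure l) = sets borel"
  by (simp add: Exp_measure_def)

lemma space_Exp_measure [simp]: "space (Exp_measure l) = UNIV"
  by (simp add: Exp_measure_def)

lemma emeasure_Exp_measure_atMost:
  assumes "0 < l"
  shows "emeasure (Exp_measure l) {..x} = ennreal (if 0 \<le> x then 1 - exp (- l * x) else 0)"
  unfolding Exp_measure_def using emeasure_erlang_density[OF assms, of 0 x]
  by (simp add: erlang_CDF_0 exponential_density_def)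

lemma cdf_Exp_measure:
  assumes "0 < l"
  shows "cdf (Exp_measure l) x = (if 0 \<le> x then 1 - exp (- l * x) else 0)"
proof -
  interpret prob_space "Exp_measure l" by (rule prob_space_Exp_measure[OF assms])
  have "0 \<le> (if 0 \<le> x then 1 - exp (- l * x) else 0)" using assms by auto
  then show ?thesis
    using emeasure_Exp_measure_atMost[OF assms, of x] by (simp add: cdf_def emeasure_eq_measure)
qed

lemma emeasure_Exp_measure_greaterThan:
  assumes "0 < l" and "0 \<le> a"
  shows "emeasure (Exp_measure l) {a<..} = ennreal (exp (- a * l))"
proof -
  interpret prob_space "Exp_measure l" by (rule prob_space_Exp_measure[OF assms(1)])
  have "{a<..} = space (Exp_measure l) - {..a}" by auto
  then have "prob {a<..} = 1 - cdf (Exp_measure l) a"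
    using prob_compl[of "{..a}"] by (simp add: cdf_def)
  then show ?thesis using assms by (simp add: cdf_Exp_measure emeasure_eq_measure mult.commute)
qed

lemma emeasure_Exp_measure_atLeast:
  assumes "0 < l" and "0 \<le> a"
  shows "emeasure (Exp_measure l) {a..} = ennreal (exp (- a * l))"
proof -
  have "emeasure (Exp_measure l) {a} = 0"
    unfolding Exp_measure_def by (subst emeasure_density) (auto intro!: nn_integral_null_set)
  moreover have "{a..} = {a<..} \<union> {a}" by auto
  ultimately show ?thesis
    using emeasure_Exp_measure_greaterThan[OF assms] plus_emeasure[of "{a<..}" "Exp_measure l" "{a}"]
    by simp
qed

lemma prob_space_Unif01: "prob_space Unif01"
  unfolding Unif01_def by (rule prob_space_uniform_measure) auto

lemma sets_Unif01 [simp, measurable_cong]: "sets Unif01 = sets borel"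
  by (simp add: Unif01_def)

lemma space_Unif01 [simp]: "space Unif01 = UNIV"
  by (simp add: Unif01_def)

lemma emeasure_Unif01_upper:
  assumes "0 \<le> h" "h \<le> 1"
  shows "emeasure Unif01 {u. u < 1 \<and> 1 - u < h} = ennreal h"
proof -
  have "{0<..<1} \<inter> {u. u < 1 \<and> 1 - u < h} = {max 0 (1 - h)<..<1::real}" by auto
  moreover have "1 - max 0 (1 - h) = h" using assms by auto
  ultimately show ?thesis using assms by (simp add: Unif01_def divide_ennreal_def)
qed

lemma nn_integral_Exp_measure_emeasure_le:
  assumes "prob_space \<Omega>" and l: "0 < l"
    and Z: "Z \<in> borel_measurable \<Omega>" and Z_nonneg: "\<And>\<omega>. 0 \<le> Z \<omega>"
  shows "(\<integral>\<^sup>+ y. emeasure \<Omega> {\<omega>\<in>space \<Omega>. Z \<omega> \<le> y} \<partial>Exp_measure l)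
       = (\<integral>\<^sup>+ \<omega>. ennreal (exp (- l * Z \<omega>)) \<partial>\<Omega>)"
proof -
  interpret \<Omega>: prob_space \<Omega> by fact
  interpret E: prob_space "Exp_measure l" by (rule prob_space_Exp_measure[OF l])
  interpret pair_sigma_finite "Exp_measure l" \<Omega> ..
  let ?I = "\<lambda>y \<omega>. indicator {\<omega>\<in>space \<Omega>. Z \<omega> \<le> y} \<omega> :: ennreal"
  have "(\<lambda>p. if Z (snd p) \<le> fst p then 1 else 0 :: ennreal) \<in> borel_measurable (Exp_measure l \<Otimes>\<^sub>M \<Omega>)"
    using Z by measurable
  then have meas: "(\<lambda>(y, \<omega>). ?I y \<omega>) \<in> borel_measurable (Exp_measure l \<Otimes>\<^sub>M \<Omega>)"
    by (rule measurable_cong[THEN iffD1, rotated]) (auto simp: space_pair_measure indicator_def)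
  have "(\<integral>\<^sup>+ y. emeasure \<Omega> {\<omega>\<in>space \<Omega>. Z \<omega> \<le> y} \<partial>Exp_measure l)
      = (\<integral>\<^sup>+ y. \<integral>\<^sup>+ \<omega>. ?I y \<omega> \<partial>\<Omega> \<partial>Exp_measure l)"
    using Z by (intro nn_integral_cong nn_integral_indicator[symmetric]) measurable
  also have "\<dots> = (\<integral>\<^sup>+ \<omega>. \<integral>\<^sup>+ y. ?I y \<omega> \<partial>Exp_measure l \<partial>\<Omega>)"
    using Fubini'[of ?I] meas by simp
  also have "\<dots> = (\<integral>\<^sup>+ \<omega>. emeasure (Exp_measure l) {Z \<omega>..} \<partial>\<Omega>)"
  proof (intro nn_integral_cong)
    fix \<omega> assume "\<omega> \<in> space \<Omega>"
    then have "(\<lambda>y. ?I y \<omega>) = indicator {Z \<omega>..}"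
      by (auto simp: indicator_def fun_eq_iff)
    then show "(\<integral>\<^sup>+ y. ?I y \<omega> \<partial>Exp_measure l) = emeasure (Exp_measure l) {Z \<omega>..}"
      by simp
  qed
  also have "\<dots> = (\<integral>\<^sup>+ \<omega>. ennreal (exp (- l * Z \<omega>)) \<partial>\<Omega>)"
    using emeasure_Exp_measure_atLeast[OF l Z_nonneg] by (simp add: mult.commute)
  finally show ?thesis .
qed

section \<open>Randomised inversion of a Laplace kernel\<close>

locale laplace_kernel =
  fixes H :: "real \<Rightarrow> real \<Rightarrow> real" and g :: "real \<Rightarrow> real" and l0 :: real
  assumes kernel_nonneg: "\<And>t y. 0 \<le> H t y"
    and kernel_le_1: "\<And>t y. H t y \<le> 1"
    and kernel_mono: "\<And>t y y'. y \<le> y' \<Longrightarrow> H t y \<le> H t y'"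
    and kernel_antimono: "\<And>t t' y. 0 \<le> t \<Longrightarrow> t \<le> t' \<Longrightarrow> H t' y \<le> H t y"
    and nn_integral_kernel: "\<And>l t. 0 < l \<Longrightarrow> 0 \<le> t \<Longrightarrow>
      (\<integral>\<^sup>+ y. ennreal (H t y) \<partial>Exp_measure l) = ennreal (exp (- t * g l))"
    and l0_pos: "0 < l0" and g_l0_pos: "0 < g l0"
begin

lemma kernel_measurable [measurable]: "H t \<in> borel_measurable borel"
  by (rule borel_measurable_mono) (auto simp: mono_def kernel_mono)

lemma kernel_eventually_le:
  assumes "u < 1"
  shows "\<exists>T. \<forall>s\<ge>T. H s y \<le> 1 - u"
proof -
  define y' where "y' = max y 0"
  define T where "T = max 0 ((y' * l0 - ln (1 - u)) / g l0)"
  have "H s y \<le> 1 - u" if "s \<ge> T" for s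
  proof -
    have s: "0 \<le> s" "y' * l0 - ln (1 - u) \<le> s * g l0"
      using \<open>s \<ge> T\<close> g_l0_pos by (auto simp: T_def divide_le_eq)
    \<comment> \<open>\<open>H s\<close> is increasing, so \<open>H s y' * P(Y > y') \<le> E (H s Y)\<close> for \<open>Y ~ Exp(l0)\<close>\<close>
    have "ennreal (H s y' * exp (- y' * l0)) = (\<integral>\<^sup>+ z. ennreal (H s y') * indicator {y'<..} z \<partial>Exp_measure l0)"
      using emeasure_Exp_measure_greaterThan[OF l0_pos, of y']
      by (simp add: y'_def ennreal_mult kernel_nonneg nn_integral_cmult_indicator)
    also have "\<dots> \<le> (\<integral>\<^sup>+ z. ennreal (H s z) \<partial>Exp_measure l0)"
      by (intro nn_integral_mono) (auto simp: indicator_def intro!: kernel_mono ennreal_leI)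
    also have "\<dots> = ennreal (exp (- s * g l0))"
      using nn_integral_kernel[OF l0_pos s(1)] .
    finally have "H s y' * exp (- y' * l0) \<le> exp (- s * g l0)"
      by (subst (asm) ennreal_le_iff) auto
    then have "H s y' \<le> exp (- s * g l0) / exp (- y' * l0)"
      by (simp add: field_simps)
    also have "\<dots> = exp (y' * l0 - s * g l0)"
      by (simp add: exp_diff[symmetric] algebra_simps)
    also have "\<dots> \<le> exp (ln (1 - u))"
      using s(2) by simp
    also have "\<dots> = 1 - u"
      using \<open>u < 1\<close> by simp
    finally show ?thesis
      using kernel_mono[of y y' s] by (simp add: y'_def)
  qed
  then show ?thesis by blast
qed

definition ell :: "real \<Rightarrow> real \<Rightarrow> real" where
  "ell y u = (if u < 1 then Sup (insert 0 {s. 0 \<le> s \<and> 1 - u < H s y}) else 0)"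

lemma bdd_above_ell_set:
  assumes "u < 1"
  shows "bdd_above (insert 0 {s. 0 \<le> s \<and> 1 - u < H s y})"
proof -
  obtain T where T: "\<And>s. s \<ge> T \<Longrightarrow> H s y \<le> 1 - u"
    using kernel_eventually_le[OF assms] by blast
  have "s \<le> max T 0" if "s \<in> insert 0 {s. 0 \<le> s \<and> 1 - u < H s y}" for s
    using that T[of s] by force
  then show ?thesis unfolding bdd_above_def by blast
qed

lemma ell_nonneg: "0 \<le> ell y u"
  using bdd_above_ell_set[of u y] by (auto simp: ell_def intro: cSup_upper)

lemma ell_mono:
  assumes "y \<le> y'" "u \<le> u'" "u' < 1"
  shows "ell y u \<le> ell y' u'"
proof -
  have "insert 0 {s. 0 \<le> s \<and> 1 - u < H s y} \<subseteq> insert 0 {s. 0 \<le> s \<and> 1 - u' < H s y'}"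
  proof
    fix s assume "s \<in> insert 0 {s. 0 \<le> s \<and> 1 - u < H s y}"
    moreover have "1 - u < H s y \<Longrightarrow> 1 - u' < H s y'"
      using assms kernel_mono[of y y' s] by linarith
    ultimately show "s \<in> insert 0 {s. 0 \<le> s \<and> 1 - u' < H s y'}" by auto
  qed
  then show ?thesis
    using assms bdd_above_ell_set[of u' y'] by (auto simp: ell_def intro!: cSup_subset_mono)
qed

lemma less_ell_iff:
  assumes "0 \<le> x"
  shows "x < ell y u \<longleftrightarrow> u < 1 \<and> (\<exists>s>x. 1 - u < H s y)"
proof (cases "u < 1")
  case True
  then have "x < ell y u \<longleftrightarrow> (\<exists>s\<in>insert 0 {s. 0 \<le> s \<and> 1 - u < H s y}. x < s)"
    using bdd_above_ell_set[OF True, of y] by (simp add: ell_def less_cSup_iff)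
  also have "\<dots> \<longleftrightarrow> (\<exists>s>x. 1 - u < H s y)"
    using assms by (smt (verit) insert_iff mem_Collect_eq)
  finally show ?thesis using True by simp
qed (use assms in \<open>simp add: ell_def\<close>)

lemma less_ell_iff_rat:
  assumes "0 \<le> x"
  shows "x < ell y u \<longleftrightarrow> (\<exists>q\<in>\<rat> \<inter> {x<..}. u < 1 \<and> 1 - u < H q y)"
proof -
  have "\<exists>q\<in>\<rat> \<inter> {x<..}. 1 - u < H q y" if "s > x" "1 - u < H s y" for s
  proof -
    obtain q where q: "q \<in> \<rat>" "x < q" "q < s" using Rats_dense_in_real[OF \<open>s > x\<close>] by blast
    then have "H s y \<le> H q y" using assms by (intro kernel_antimono) auto
    then show ?thesis using q that by (intro bexI[of _ q]) auto
  qed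
  then show ?thesis using less_ell_iff[OF assms] by auto
qed

lemma ell_measurable: "(\<lambda>(y, u). ell y u) \<in> borel_measurable (borel \<Otimes>\<^sub>M borel)"
proof (subst borel_measurable_iff_greater, intro allI)
  fix x :: real
  let ?A = "{w \<in> space (borel \<Otimes>\<^sub>M borel). x < (case w of (y, u) \<Rightarrow> ell y u)}"
  show "?A \<in> sets (borel \<Otimes>\<^sub>M borel)"
  proof (cases "0 \<le> x")
    case False
    then have "?A = space (borel \<Otimes>\<^sub>M borel)"
      using ell_nonneg by (auto simp: not_le intro: less_le_trans)
    then show ?thesis by simp
  next
    case True
    then have "?A = (\<Union>q\<in>\<rat> \<inter> {x<..}.
        {w \<in> space (borel \<Otimes>\<^sub>M borel). snd w < 1 \<and> 1 - snd w < H q (fst w)})"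
      using less_ell_iff_rat by auto
    also have "\<dots> \<in> sets (borel \<Otimes>\<^sub>M borel)"
      by (intro sets.countable_UN'') (auto intro: countable_Int1 countable_rat)
    finally show ?thesis .
  qed
qed

definition kernel_right_limit :: "real \<Rightarrow> real \<Rightarrow> real" where
  "kernel_right_limit x y = (SUP n. H (x + 1 / Suc n) y)"

lemma incseq_kernel_right_approx: "0 \<le> x \<Longrightarrow> incseq (\<lambda>n. H (x + 1 / Suc n) y)"
  unfolding incseq_def by (auto intro!: kernel_antimono simp: field_simps)

lemma bdd_above_kernel_right_limit: "bdd_above (range (\<lambda>n. H (x + 1 / Suc n) y))"
  using kernel_le_1 unfolding bdd_above_def by blast

lemma kernel_right_limit_bounds: "0 \<le> kernel_right_limit x y" "kernel_right_limit x y \<le> 1"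
  unfolding kernel_right_limit_def using bdd_above_kernel_right_limit kernel_nonneg kernel_le_1
  by (auto intro: cSUP_upper2[where x=0] cSUP_least)

lemma less_ell_iff_right_limit:
  assumes "0 \<le> x"
  shows "x < ell y u \<longleftrightarrow> u < 1 \<and> 1 - u < kernel_right_limit x y"
proof -
  have "(\<exists>s>x. 1 - u < H s y) \<longleftrightarrow> 1 - u < kernel_right_limit x y"
  proof
    assume "\<exists>s>x. 1 - u < H s y"
    then obtain s where s: "s > x" "1 - u < H s y" by blast
    obtain n where "1 / Suc n < s - x"
      using s(1) by (metis diff_gt_0_iff_gt nat_approx_posE)
    then have "H s y \<le> H (x + 1 / Suc n) y" using assms by (intro kernel_antimono) auto
    also have "\<dots> \<le> kernel_right_limit x y"
      unfolding kernel_right_limit_def by (intro cSUP_upper bdd_above_kernel_right_limit) auto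
    finally show "1 - u < kernel_right_limit x y" using s by linarith
  next
    assume "1 - u < kernel_right_limit x y"
    then obtain n where "1 - u < H (x + 1 / Suc n) y"
      using bdd_above_kernel_right_limit by (auto simp: kernel_right_limit_def less_cSUP_iff)
    then show "\<exists>s>x. 1 - u < H s y" by (intro exI[of _ "x + 1 / Suc n"]) auto
  qed
  then show ?thesis using less_ell_iff[OF assms] by auto
qed

lemma nn_integral_kernel_right_limit:
  assumes l: "0 < l" and x: "0 \<le> x"
  shows "(\<integral>\<^sup>+ y. ennreal (kernel_right_limit x y) \<partial>Exp_measure l) = ennreal (exp (- x * g l))"
proof (rule LIMSEQ_unique)
  let ?f = "\<lambda>n y. H (x + 1 / Suc n) y"
  show "(\<lambda>n. \<integral>\<^sup>+ y. ennreal (?f n y) \<partial>Exp_measure l)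
      \<longlonglongrightarrow> (\<integral>\<^sup>+ y. ennreal (kernel_right_limit x y) \<partial>Exp_measure l)"
  proof (rule nn_integral_LIMSEQ)
    show "incseq (\<lambda>n y. ennreal (?f n y))"
      using incseq_kernel_right_approx[OF x] by (auto simp: incseq_def le_fun_def intro!: ennreal_leI)
    show "(\<lambda>n. ennreal (?f n y)) \<longlonglongrightarrow> ennreal (kernel_right_limit x y)" for y
      unfolding kernel_right_limit_def using x
      by (intro tendsto_ennrealI LIMSEQ_incseq_SUP bdd_above_kernel_right_limit
          incseq_kernel_right_approx)
  qed simp
  have "(\<lambda>n. \<integral>\<^sup>+ y. ennreal (?f n y) \<partial>Exp_measure l) = (\<lambda>n. ennreal (exp (- (x + 1 / Suc n) * g l)))"
    using x by (intro ext nn_integral_kernel l) auto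
  also have "\<dots> \<longlonglongrightarrow> ennreal (exp (- (x + 0) * g l))"
    by (intro tendsto_ennrealI tendsto_intros LIMSEQ_Suc[OF lim_inverse_n'])
  finally show "(\<lambda>n. \<integral>\<^sup>+ y. ennreal (?f n y) \<partial>Exp_measure l) \<longlonglongrightarrow> ennreal (exp (- x * g l))"
    by simp
qed

lemma emeasure_less_ell:
  assumes l: "0 < l" and x: "0 \<le> x"
  shows "emeasure (Exp_measure l \<Otimes>\<^sub>M Unif01) {w. x < ell (fst w) (snd w)} = ennreal (exp (- x * g l))"
proof -
  interpret U: prob_space Unif01 by (rule prob_space_Unif01)
  have "(\<lambda>w. ell (fst w) (snd w)) \<in> borel_measurable (Exp_measure l \<Otimes>\<^sub>M Unif01)"
    using ell_measurable by (simp add: case_prod_beta' cong: measurable_cong_sets)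
  from measurable_sets[OF this, of "{x<..}"]
  have "emeasure (Exp_measure l \<Otimes>\<^sub>M Unif01) {w. x < ell (fst w) (snd w)}
      = (\<integral>\<^sup>+ y. emeasure Unif01 {u. x < ell y u} \<partial>Exp_measure l)"
    by (subst U.emeasure_pair_measure_alt) (auto simp: space_pair_measure vimage_def)
  also have "\<dots> = (\<integral>\<^sup>+ y. ennreal (kernel_right_limit x y) \<partial>Exp_measure l)"
    using x by (intro nn_integral_cong)
      (simp add: less_ell_iff_right_limit emeasure_Unif01_upper kernel_right_limit_bounds)
  finally show ?thesis using nn_integral_kernel_right_limit[OF l x] by simp
qed

lemma distr_ell:
  assumes l: "0 < l" and gl: "0 < g l"
  shows "distr (Exp_measure l \<Otimes>\<^sub>M Unif01) borel (\<lambda>(y, u). ell y u) = Exp_measure (g l)"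
proof (rule cdf_unique)
  interpret P: prob_space "Exp_measure l \<Otimes>\<^sub>M Unif01"
    by (intro prob_space_pair prob_space_Exp_measure l prob_space_Unif01)
  have meas: "(\<lambda>(y, u). ell y u) \<in> borel_measurable (Exp_measure l \<Otimes>\<^sub>M Unif01)"
    using ell_measurable by (simp cong: measurable_cong_sets)
  let ?D = "distr (Exp_measure l \<Otimes>\<^sub>M Unif01) borel (\<lambda>(y, u). ell y u)"
  show "real_distribution ?D"
    using P.prob_space_distr[OF meas] by (simp add: real_distribution_def real_distribution_axioms_def)
  show "real_distribution (Exp_measure (g l))"
    using prob_space_Exp_measure[OF gl] by (simp add: real_distribution_def real_distribution_axioms_def)
  show "cdf ?D = cdf (Exp_measure (g l))"
  proof
    fix x
    have "cdf ?D x = P.prob ((\<lambda>(y, u). ell y u) -` {..x} \<inter> space (Exp_measure l \<Otimes>\<^sub>M Unif01))"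
      by (simp add: cdf_def measure_distr[OF meas])
    also have "(\<lambda>(y, u). ell y u) -` {..x} \<inter> space (Exp_measure l \<Otimes>\<^sub>M Unif01)
        = space (Exp_measure l \<Otimes>\<^sub>M Unif01) - {w. x < ell (fst w) (snd w)}"
      by (auto simp: space_pair_measure not_less)
    also have "P.prob \<dots> = 1 - P.prob {w. x < ell (fst w) (snd w)}"
      using measurable_sets[OF meas, of "{x<..}"]
      by (intro P.prob_compl) (simp add: space_pair_measure vimage_def case_prod_beta')
    also have "\<dots> = (if 0 \<le> x then 1 - exp (- g l * x) else 0)"
    proof (cases "0 \<le> x")
      case True
      then show ?thesis
        using emeasure_less_ell[OF l True] by (simp add: P.emeasure_eq_measure mult.commute)
    next
      case False
      then have "{w. x < ell (fst w) (snd w)} = space (Exp_measure l \<Otimes>\<^sub>M Unif01)"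
        using ell_nonneg by (auto simp: space_pair_measure not_le intro: less_le_trans)
      then show ?thesis using False by (simp add: P.prob_space)
    qed
    finally show "cdf ?D x = cdf (Exp_measure (g l)) x"
      using gl by (simp add: cdf_Exp_measure)
  qed
qed

end

section \<open>Compound Poisson sums\<close>

definition poisson_measure :: "real \<Rightarrow> nat measure" where
  "poisson_measure m = density (count_space UNIV) (\<lambda>n. ennreal (m ^ n / fact n * exp (- m)))"

lemma sets_poisson_measure [simp, measurable_cong]:
  "sets (poisson_measure m) = sets (count_space UNIV)"
  by (simp add: poisson_measure_def)

lemma nn_integral_poisson_measure_power:
  assumes m: "0 \<le> m" and z: "0 \<le> z"
  shows "(\<integral>\<^sup>+ n. ennreal (z ^ n) \<partial>poisson_measure m) = ennreal (exp (- m * (1 - z)))"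
proof -
  have "(\<lambda>n. exp (- m) * ((m * z) ^ n /\<^sub>R fact n)) sums (exp (- m) * exp (m * z))"
    by (intro sums_mult exp_converges)
  moreover have "exp (- m) * ((m * z) ^ n /\<^sub>R fact n) = m ^ n / fact n * exp (- m) * z ^ n" for n
    by (simp add: power_mult_distrib field_simps)
  ultimately have sums: "(\<lambda>n. m ^ n / fact n * exp (- m) * z ^ n) sums exp (- m * (1 - z))"
    by (simp add: exp_add[symmetric] algebra_simps)
  have "(\<integral>\<^sup>+ n. ennreal (z ^ n) \<partial>poisson_measure m)
      = (\<integral>\<^sup>+ n. ennreal (m ^ n / fact n * exp (- m)) * ennreal (z ^ n) \<partial>count_space UNIV)"
    unfolding poisson_measure_def by (subst nn_integral_density) auto
  also have "\<dots> = (\<Sum>n. ennreal (m ^ n / fact n * exp (- m) * z ^ n))"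
    by (subst nn_integral_count_space_nat) (simp add: ennreal_mult'[symmetric] m z)
  also have "\<dots> = ennreal (exp (- m * (1 - z)))"
    using sums m z by (subst suminf_ennreal2) (auto simp: sums_iff)
  finally show ?thesis .
qed

lemma prob_space_poisson_measure: "0 \<le> m \<Longrightarrow> prob_space (poisson_measure m)"
  using nn_integral_poisson_measure_power[of m 1] nn_integral_const[of "poisson_measure m" 1]
  by (intro prob_spaceI) simp

lemma nn_integral_PiM_prod:
  fixes M :: "'i \<Rightarrow> 'a measure"
  assumes M: "\<And>i. prob_space (M i)" and J: "finite J"
    and f: "\<And>i. i \<in> J \<Longrightarrow> f i \<in> borel_measurable (M i)"
  shows "(\<integral>\<^sup>+\<omega>. (\<Prod>i\<in>J. f i (\<omega> i)) \<partial>PiM UNIV M) = (\<Prod>i\<in>J. \<integral>\<^sup>+x. f i x \<partial>M i)"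
proof -
  interpret product_prob_space M UNIV
    by (intro product_prob_spaceI M)
  have meas: "(\<lambda>x. \<Prod>i\<in>J. f i (x i)) \<in> borel_measurable (PiM J M)"
    using f by (intro borel_measurable_prod_ennreal
        measurable_comp[OF measurable_component_singleton, unfolded comp_def]) auto
  have "(\<integral>\<^sup>+\<omega>. (\<Prod>i\<in>J. f i (\<omega> i)) \<partial>PiM UNIV M) = (\<integral>\<^sup>+\<omega>. (\<Prod>i\<in>J. f i (restrict \<omega> J i)) \<partial>PiM UNIV M)"
    by (intro nn_integral_cong prod.cong) auto
  also have "\<dots> = (\<integral>\<^sup>+x. (\<Prod>i\<in>J. f i (x i)) \<partial>distr (PiM UNIV M) (PiM J M) (\<lambda>x. restrict x J))"
    using meas by (subst nn_integral_distr) (auto intro!: measurable_restrict_subset)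
  also have "\<dots> = (\<integral>\<^sup>+x. (\<Prod>i\<in>J. f i (x i)) \<partial>PiM J M)"
    using J by (subst distr_PiM_restrict_finite) auto
  also have "\<dots> = (\<Prod>i\<in>J. \<integral>\<^sup>+x. f i x \<partial>M i)"
    using J f by (intro product_nn_integral_prod) auto
  finally show ?thesis .
qed

definition jump_before :: "real \<Rightarrow> real \<times> real \<Rightarrow> real" where
  "jump_before t p = (if fst p \<le> t then max 0 (snd p) else 0)"

definition cell_sum :: "real \<Rightarrow> nat \<times> (nat \<Rightarrow> real \<times> real) \<Rightarrow> real" where
  "cell_sum t x = (\<Sum>i<fst x. jump_before t (snd x i))"

lemma jump_before_measurable [measurable]: "jump_before t \<in> borel_measurable (borel \<Otimes>\<^sub>M borel)"
  unfolding jump_before_def by measurable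

lemma cell_sum_nonneg: "0 \<le> cell_sum t x"
  by (simp add: cell_sum_def jump_before_def sum_nonneg)

lemma cell_sum_mono: "t \<le> t' \<Longrightarrow> cell_sum t x \<le> cell_sum t' x"
  by (simp add: cell_sum_def jump_before_def sum_mono)

abbreviation cell_space :: "(nat \<times> (nat \<Rightarrow> real \<times> real)) measure" where
  "cell_space \<equiv> count_space UNIV \<Otimes>\<^sub>M PiM UNIV (\<lambda>_::nat. borel \<Otimes>\<^sub>M borel)"

lemma cell_sum_measurable [measurable]: "cell_sum t \<in> borel_measurable cell_space"
  unfolding cell_sum_def
proof (rule measurable_pair_measure_countable1)
  fix n :: nat
  show "(\<lambda>y. \<Sum>i<fst (n, y). jump_before t (snd (n, y) i))
      \<in> borel_measurable (PiM UNIV (\<lambda>_::nat. borel \<Otimes>\<^sub>M borel))"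
    by simp measurable
qed simp

lemma nn_integral_cell_sum_exp:
  assumes m: "0 \<le> m" and Q: "prob_space Q" and sets_Q: "sets Q = sets (borel \<Otimes>\<^sub>M borel)"
    and psi: "(\<integral>\<^sup>+ p. ennreal (exp (- l * jump_before t p)) \<partial>Q) = ennreal \<psi>" and "0 \<le> \<psi>"
  shows "(\<integral>\<^sup>+ x. ennreal (exp (- l * cell_sum t x)) \<partial>(poisson_measure m \<Otimes>\<^sub>M PiM UNIV (\<lambda>_::nat. Q)))
       = ennreal (exp (- m * (1 - \<psi>)))"
proof -
  interpret Q: prob_space Q by fact
  interpret QQ: product_prob_space "\<lambda>_::nat. Q" UNIV ..
  have [measurable]: "jump_before t \<in> borel_measurable Q"
    using sets_Q by (simp cong: measurable_cong_sets)
  have "sets (poisson_measure m \<Otimes>\<^sub>M PiM UNIV (\<lambda>_::nat. Q)) = sets cell_space"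
    by (intro sets_pair_measure_cong sets_PiM_cong) (auto simp: sets_Q)
  then have "(\<lambda>x. ennreal (exp (- l * cell_sum t x)))
      \<in> borel_measurable (poisson_measure m \<Otimes>\<^sub>M PiM UNIV (\<lambda>_::nat. Q))"
    by (simp cong: measurable_cong_sets)
  then have "(\<integral>\<^sup>+ x. ennreal (exp (- l * cell_sum t x)) \<partial>(poisson_measure m \<Otimes>\<^sub>M PiM UNIV (\<lambda>_::nat. Q)))
      = (\<integral>\<^sup>+ n. \<integral>\<^sup>+ xs. ennreal (exp (- l * cell_sum t (n, xs))) \<partial>PiM UNIV (\<lambda>_::nat. Q) \<partial>poisson_measure m)"
    by (rule QQ.P.nn_integral_fst[symmetric])
  also have "\<dots> = (\<integral>\<^sup>+ n. ennreal (\<psi> ^ n) \<partial>poisson_measure m)"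
  proof (intro nn_integral_cong)
    fix n :: nat
    have "(\<integral>\<^sup>+ xs. ennreal (exp (- l * cell_sum t (n, xs))) \<partial>PiM UNIV (\<lambda>_::nat. Q))
       = (\<integral>\<^sup>+ xs. (\<Prod>i<n. ennreal (exp (- l * jump_before t (xs i)))) \<partial>PiM UNIV (\<lambda>_::nat. Q))"
      by (intro nn_integral_cong) (simp add: cell_sum_def sum_distrib_left exp_sum prod_ennreal)
    also have "\<dots> = (\<Prod>i<n. \<integral>\<^sup>+ p. ennreal (exp (- l * jump_before t p)) \<partial>Q)"
      by (rule nn_integral_PiM_prod) (auto simp: Q)
    also have "\<dots> = ennreal (\<psi> ^ n)"
      unfolding psi using \<open>0 \<le> \<psi>\<close> by (simp add: ennreal_power)
    finally show "(\<integral>\<^sup>+ xs. ennreal (exp (- l * cell_sum t (n, xs))) \<partial>PiM UNIV (\<lambda>_::nat. Q))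
        = ennreal (\<psi> ^ n)" .
  qed
  also have "\<dots> = ennreal (exp (- m * (1 - \<psi>)))"
    by (rule nn_integral_poisson_measure_power[OF m \<open>0 \<le> \<psi>\<close>])
  finally show ?thesis .
qed

definition clamp01 :: "real \<Rightarrow> real" where
  "clamp01 x = max 0 (min 1 x)"

lemma clamp01_bounds: "0 \<le> clamp01 x" "clamp01 x \<le> 1"
  by (auto simp: clamp01_def)

lemma sum_clamp01: "0 \<le> t \<Longrightarrow> (\<Sum>j<K. clamp01 (t - real j)) = min t (real K)"
  by (induction K) (auto simp: clamp01_def min_def max_def)

definition unif_slot :: "nat \<Rightarrow> real measure" where
  "unif_slot j = uniform_measure lborel {real j<..real j + 1}"

lemma prob_space_unif_slot: "prob_space (unif_slot j)"
  unfolding unif_slot_def by (rule prob_space_uniform_measure) auto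

lemma sets_unif_slot [simp, measurable_cong]: "sets (unif_slot j) = sets borel"
  by (simp add: unif_slot_def)

lemma space_unif_slot [simp]: "space (unif_slot j) = UNIV"
  by (simp add: unif_slot_def)

lemma emeasure_unif_slot_atMost: "emeasure (unif_slot j) {..t} = ennreal (clamp01 (t - real j))"
proof -
  have "emeasure (unif_slot j) {..t} = emeasure lborel ({real j<..real j + 1} \<inter> {..t})"
    by (simp add: unif_slot_def divide_ennreal_def)
  also have "{real j<..real j + 1} \<inter> {..t} = {real j<..max (real j) (min (real j + 1) t)}"
    by auto
  also have "emeasure lborel \<dots> = ennreal (clamp01 (t - real j))"
    by (simp add: clamp01_def) (auto simp: max_def min_def ennreal_eq_0_iff)
  finally show ?thesis .
qed

lemma emeasure_unif_slot_greaterThan: "emeasure (unif_slot j) {t<..} = ennreal (1 - clamp01 (t - real j))"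
proof -
  interpret prob_space "unif_slot j" by (rule prob_space_unif_slot)
  have "{t<..} = space (unif_slot j) - {..t}" by auto
  then have "prob {t<..} = 1 - prob {..t}" using prob_compl[of "{..t}"] by simp
  then show ?thesis
    using emeasure_unif_slot_atMost[of j t] clamp01_bounds by (simp add: emeasure_eq_measure)
qed

lemma nn_integral_jump_before_exp:
  assumes "prob_space \<pi>" and sets_\<pi>: "sets \<pi> = sets borel"
    and \<phi>: "(\<integral>\<^sup>+ r. ennreal (exp (- l * max 0 r)) \<partial>\<pi>) = ennreal \<phi>" and "0 \<le> \<phi>"
  shows "(\<integral>\<^sup>+ p. ennreal (exp (- l * jump_before t p)) \<partial>(unif_slot j \<Otimes>\<^sub>M \<pi>))
       = ennreal (1 - clamp01 (t - real j) * (1 - \<phi>))"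
proof -
  interpret \<pi>: prob_space \<pi> by fact
  have [measurable_cong]: "sets (unif_slot j \<Otimes>\<^sub>M \<pi>) = sets (borel \<Otimes>\<^sub>M borel)"
    by (intro sets_pair_measure_cong) (auto simp: sets_\<pi>)
  define a where "a = clamp01 (t - real j)"
  have "(\<integral>\<^sup>+ p. ennreal (exp (- l * jump_before t p)) \<partial>(unif_slot j \<Otimes>\<^sub>M \<pi>))
      = (\<integral>\<^sup>+ \<tau>. \<integral>\<^sup>+ r. ennreal (exp (- l * jump_before t (\<tau>, r))) \<partial>\<pi> \<partial>unif_slot j)"
    by (rule \<pi>.nn_integral_fst[symmetric]) measurable
  also have "\<dots> = (\<integral>\<^sup>+ \<tau>. ennreal \<phi> * indicator {..t} \<tau> + indicator {t<..} \<tau> \<partial>unif_slot j)"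
    using \<phi> \<pi>.emeasure_space_1 by (intro nn_integral_cong) (simp add: jump_before_def indicator_def)
  also have "\<dots> = ennreal \<phi> * emeasure (unif_slot j) {..t} + emeasure (unif_slot j) {t<..}"
    by (subst nn_integral_add) (auto simp: nn_integral_cmult_indicator)
  also have "\<dots> = ennreal (\<phi> * a + (1 - a))"
    using clamp01_bounds \<open>0 \<le> \<phi>\<close>
    by (simp add: a_def emeasure_unif_slot_atMost emeasure_unif_slot_greaterThan ennreal_mult
        ennreal_plus[symmetric])
  also have "\<phi> * a + (1 - a) = 1 - a * (1 - \<phi>)" by (simp add: algebra_simps)
  finally show ?thesis by (simp add: a_def)
qed

section \<open>Levy measures\<close>

definition size_band :: "nat \<Rightarrow> real set" where
  "size_band k = (if k = 0 then {1<..} else {1 / real (Suc k)<..1 / real k})"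

lemma size_band_pos: "r \<in> size_band k \<Longrightarrow> 0 < r"
  by (auto simp: size_band_def split: if_splits intro: less_trans[rotated])

lemma size_band_lower:
  assumes "r \<in> size_band k"
  shows "1 / real (Suc k) \<le> min r 1"
proof (cases "k = 0")
  case False
  then have "1 / real (Suc k) < r" using assms by (simp add: size_band_def)
  moreover have "1 / real (Suc k) \<le> 1" by (simp add: divide_le_eq)
  ultimately show ?thesis by simp
qed (use assms in \<open>auto simp: size_band_def\<close>)

lemma size_band_sets [measurable]: "size_band k \<in> sets borel"
  by (simp add: size_band_def)

lemma disjoint_family_size_band: "disjoint_family size_band"
proof -
  have "size_band k \<inter> size_band k' = {}" if "k < k'" for k k'
  proof -
    have "r \<le> 1 / real k'" if "r \<in> size_band k'" for r
      using that \<open>k < k'\<close> by (auto simp: size_band_def)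
    moreover have "1 / real k' \<le> 1 / real (Suc k)"
      using that by (intro divide_left_mono) auto
    moreover have "1 / real (Suc k) < r" if "r \<in> size_band k" for r
      using that by (cases "k = 0") (auto simp: size_band_def)
    ultimately show ?thesis by force
  qed
  then show ?thesis unfolding disjoint_family_on_def
    by (metis Int_commute linorder_neqE_nat)
qed

lemma UN_size_band: "(\<Union>k. size_band k) = {0<..}"
proof
  show "(\<Union>k. size_band k) \<subseteq> {0<..}" using size_band_pos by auto
  show "{0<..} \<subseteq> (\<Union>k. size_band k)"
  proof
    fix r :: real assume "r \<in> {0<..}"
    then have r: "0 < r" by simp
    show "r \<in> (\<Union>k. size_band k)"
    proof (cases "1 < r")
      case True then show ?thesis by (intro UN_I[of 0]) (auto simp: size_band_def)
    next
      case False
      define k where "k = nat \<lfloor>1 / r\<rfloor>"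
      have "1 \<le> 1 / r" using False r by (simp add: le_divide_eq)
      then have k: "1 \<le> k" "real k \<le> 1 / r" "1 / r < real k + 1"
        unfolding k_def by linarith+
      then have "r \<le> 1 / real k" "1 / real (Suc k) < r"
        using r by (simp_all add: le_divide_eq divide_less_eq mult.commute algebra_simps)
      then show ?thesis using k by (intro UN_I[of k]) (auto simp: size_band_def)
    qed
  qed
qed

lemma one_minus_exp_le_min:
  fixes r l :: real
  assumes "0 < r" "0 < l"
  shows "1 - exp (- r * l) \<le> max l 1 * min r 1"
proof (cases "r \<le> 1")
  case True
  have "1 - exp (- r * l) \<le> r * l" using exp_ge_add_one_self[of "- r * l"] by simp
  also have "\<dots> \<le> r * max l 1" using assms by (intro mult_left_mono) auto
  finally show ?thesis using True by (simp add: mult.commute)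
qed (auto intro: order_trans[of _ 1])

locale levy_measure =
  fixes \<nu> :: "real measure"
  assumes sets_levy [measurable_cong]: "sets \<nu> = sets borel"
    and levy_nonpos_null: "emeasure \<nu> {..0} = 0"
    and levy_min_integrable: "(\<integral>\<^sup>+ r. ennreal (min r 1) \<partial>\<nu>) < \<infinity>"
begin

lemma AE_levy_pos: "AE r in \<nu>. 0 < r"
  by (rule AE_I'[of "{..0}"]) (auto simp: null_sets_def sets_levy levy_nonpos_null)

lemma emeasure_size_band_finite: "emeasure \<nu> (size_band k) < \<infinity>"
proof -
  have "ennreal (1 / real (Suc k)) * emeasure \<nu> (size_band k)
      = (\<integral>\<^sup>+ r. ennreal (1 / real (Suc k)) * indicator (size_band k) r \<partial>\<nu>)"
    by (simp add: nn_integral_cmult_indicator)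
  also have "\<dots> \<le> (\<integral>\<^sup>+ r. ennreal (min r 1) \<partial>\<nu>)"
    using size_band_lower by (intro nn_integral_mono) (auto simp: indicator_def ennreal_leI)
  also have "\<dots> < \<infinity>" by (rule levy_min_integrable)
  finally show ?thesis
    by (cases "emeasure \<nu> (size_band k) = 0") (auto simp: ennreal_mult_less_top)
qed

definition band_mass :: "nat \<Rightarrow> real" where
  "band_mass k = measure \<nu> (size_band k)"

lemma emeasure_size_band: "emeasure \<nu> (size_band k) = ennreal (band_mass k)"
  using emeasure_size_band_finite[of k] by (simp add: band_mass_def emeasure_eq_ennreal_measure)

lemma band_mass_nonneg: "0 \<le> band_mass k"
  by (simp add: band_mass_def)

text \<open>The law of a single jump with size in band \<open>k\<close>. If the band is \<open>\<nu>\<close>-null, the Poisson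
  number of such jumps vanishes almost surely and the fallback law is irrelevant.\<close>
definition band_law :: "nat \<Rightarrow> real measure" where
  "band_law k = (if 0 < band_mass k then uniform_measure \<nu> (size_band k) else return borel 1)"

lemma prob_space_band_law: "prob_space (band_law k)"
  unfolding band_law_def using emeasure_size_band[of k]
  by (auto intro!: prob_space_uniform_measure prob_space_return)

lemma sets_band_law [simp]: "sets (band_law k) = sets borel"
  by (simp add: band_law_def sets_levy)

definition band_exponent :: "nat \<Rightarrow> real \<Rightarrow> real" where
  "band_exponent k l = enn2real (\<integral>\<^sup>+ r. ennreal (1 - exp (- r * l)) * indicator (size_band k) r \<partial>\<nu>)"

lemma band_exponent_nonneg: "0 \<le> band_exponent k l"
  by (simp add: band_exponent_def)

lemma nn_integral_band_exponent:
  assumes "0 < l"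
  shows "(\<integral>\<^sup>+ r. ennreal (1 - exp (- r * l)) * indicator (size_band k) r \<partial>\<nu>) = ennreal (band_exponent k l)"
proof -
  have "(\<integral>\<^sup>+ r. ennreal (1 - exp (- r * l)) * indicator (size_band k) r \<partial>\<nu>)
      \<le> (\<integral>\<^sup>+ r. indicator (size_band k) r \<partial>\<nu>)"
    by (intro nn_integral_mono) (auto simp: indicator_def)
  also have "\<dots> < \<infinity>" using emeasure_size_band_finite by simp
  finally show ?thesis unfolding band_exponent_def by (simp add: less_top)
qed

lemma band_exponent_add_band_laplace:
  assumes "0 < l"
  shows "ennreal (band_exponent k l) + (\<integral>\<^sup>+ r. ennreal (exp (- r * l)) * indicator (size_band k) r \<partial>\<nu>)
       = ennreal (band_mass k)"
proof -
  have "ennreal (band_exponent k l) + (\<integral>\<^sup>+ r. ennreal (exp (- r * l)) * indicator (size_band k) r \<partial>\<nu>)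
      = (\<integral>\<^sup>+ r. ennreal (1 - exp (- r * l)) * indicator (size_band k) r
            + ennreal (exp (- r * l)) * indicator (size_band k) r \<partial>\<nu>)"
    unfolding nn_integral_band_exponent[OF assms, symmetric] by (subst nn_integral_add) auto
  also have "\<dots> = (\<integral>\<^sup>+ r. indicator (size_band k) r \<partial>\<nu>)"
    using assms by (intro nn_integral_cong) (auto simp: indicator_def ennreal_plus[symmetric]
        simp del: ennreal_plus dest!: size_band_pos)
  finally show ?thesis using emeasure_size_band by simp
qed

lemma band_law_laplace:
  assumes l: "0 < l"
  obtains \<phi> where "0 \<le> \<phi>" "(\<integral>\<^sup>+ r. ennreal (exp (- l * max 0 r)) \<partial>band_law k) = ennreal \<phi>"
    "band_mass k * (1 - \<phi>) = band_exponent k l"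
proof (cases "0 < band_mass k")
  case False
  then have "band_mass k = 0" using band_mass_nonneg[of k] by simp
  moreover have "(\<integral>\<^sup>+ r. ennreal (exp (- l * max 0 r)) \<partial>band_law k) = ennreal (exp (- l))"
    using False by (simp add: band_law_def nn_integral_return)
  ultimately show ?thesis
    using that[of "exp (- l)"] band_exponent_add_band_laplace[OF l, of k] band_exponent_nonneg[of k l]
    by simp
next
  case True
  define I where "I = (\<integral>\<^sup>+ r. ennreal (exp (- r * l)) * indicator (size_band k) r \<partial>\<nu>)"
  have sum: "ennreal (band_exponent k l) + I = ennreal (band_mass k)"
    unfolding I_def by (rule band_exponent_add_band_laplace[OF l])
  then obtain Ir where Ir: "I = ennreal Ir" "0 \<le> Ir"
    by (metis ennreal_cases ennreal_add_eq_top ennreal_neq_top)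
  then have exponent: "band_exponent k l = band_mass k - Ir"
    using sum band_exponent_nonneg[of k l] band_mass_nonneg[of k]
    by (simp add: ennreal_plus[symmetric] ennreal_inj del: ennreal_plus)
  have "(\<integral>\<^sup>+ r. ennreal (exp (- l * max 0 r)) \<partial>band_law k)
      = (\<integral>\<^sup>+ r. ennreal (exp (- l * max 0 r)) * indicator (size_band k) r \<partial>\<nu>) / emeasure \<nu> (size_band k)"
    using True by (simp add: band_law_def nn_integral_uniform_measure)
  also have "(\<integral>\<^sup>+ r. ennreal (exp (- l * max 0 r)) * indicator (size_band k) r \<partial>\<nu>) = I"
    unfolding I_def
    by (intro nn_integral_cong) (auto simp: indicator_def mult.commute dest: size_band_pos)
  also have "I / emeasure \<nu> (size_band k) = ennreal (Ir / band_mass k)"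
    using True Ir by (simp add: emeasure_size_band divide_ennreal)
  finally show ?thesis
    using that[of "Ir / band_mass k"] True Ir exponent by (simp add: right_diff_distrib)
qed

definition laplace_exponent :: "real \<Rightarrow> real" where
  "laplace_exponent l = (\<integral>r. (1 - exp (- r * l)) \<partial>\<nu>)"

lemma nn_integral_laplace_exponent:
  assumes l: "0 < l"
  shows "(\<integral>\<^sup>+ r. ennreal (1 - exp (- r * l)) \<partial>\<nu>) = ennreal (laplace_exponent l)"
proof -
  have "(\<integral>\<^sup>+ r. ennreal (1 - exp (- r * l)) \<partial>\<nu>) \<le> (\<integral>\<^sup>+ r. ennreal (max l 1) * ennreal (min r 1) \<partial>\<nu>)"
  proof (intro nn_integral_mono_AE)
    show "AE r in \<nu>. ennreal (1 - exp (- r * l)) \<le> ennreal (max l 1) * ennreal (min r 1)"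
      using AE_levy_pos
    proof eventually_elim
      case (elim r)
      then show ?case
        using one_minus_exp_le_min[OF elim l] by (simp add: ennreal_mult[symmetric] ennreal_leI)
    qed
  qed
  also have "\<dots> = ennreal (max l 1) * (\<integral>\<^sup>+ r. ennreal (min r 1) \<partial>\<nu>)"
    by (rule nn_integral_cmult) simp
  also have "\<dots> < \<infinity>" using levy_min_integrable by (simp add: ennreal_mult_less_top)
  finally have "(\<integral>\<^sup>+ r. ennreal (1 - exp (- r * l)) \<partial>\<nu>) < \<infinity>" .
  moreover have "laplace_exponent l = enn2real (\<integral>\<^sup>+ r. ennreal (1 - exp (- r * l)) \<partial>\<nu>)"
    unfolding laplace_exponent_def
    by (rule integral_eq_nn_integral) (use AE_levy_pos l in \<open>auto elim!: eventually_mono\<close>)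
  ultimately show ?thesis by (simp add: less_top[symmetric])
qed

lemma laplace_exponent_nonneg: "0 < l \<Longrightarrow> 0 \<le> laplace_exponent l"
  unfolding laplace_exponent_def
  by (rule integral_nonneg_AE) (use AE_levy_pos in \<open>auto elim!: eventually_mono\<close>)

lemma band_exponent_sums:
  assumes l: "0 < l"
  shows "(\<lambda>k. band_exponent k l) sums laplace_exponent l"
proof -
  let ?F = "\<lambda>r. ennreal (1 - exp (- r * l))"
  have "ennreal (laplace_exponent l) = (\<integral>\<^sup>+ r. ?F r * indicator {0<..} r \<partial>\<nu>)"
    unfolding nn_integral_laplace_exponent[OF l, symmetric]
    by (intro nn_integral_cong_AE) (use AE_levy_pos in \<open>auto simp: indicator_def\<close>)
  also have "\<dots> = (\<integral>\<^sup>+ r. (\<Sum>k. ?F r * indicator (size_band k) r) \<partial>\<nu>)"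
    by (simp add: suminf_indicator[OF disjoint_family_size_band] UN_size_band)
  also have "\<dots> = (\<Sum>k. \<integral>\<^sup>+ r. ?F r * indicator (size_band k) r \<partial>\<nu>)"
    by (rule nn_integral_suminf) simp
  also have "\<dots> = (\<Sum>k. ennreal (band_exponent k l))"
    using nn_integral_band_exponent[OF l] by simp
  finally have "(\<lambda>k. ennreal (band_exponent k l)) sums ennreal (laplace_exponent l)"
    using summable_sums[OF summableI, of "\<lambda>k. ennreal (band_exponent k l)"] by simp
  then show ?thesis
    using laplace_exponent_nonneg[OF l] by (simp add: band_exponent_nonneg)
qed

end

section \<open>The killed subordinator\<close>

definition partial_jumps :: "nat \<Rightarrow> real \<Rightarrow> (nat \<times> nat \<Rightarrow> nat \<times> (nat \<Rightarrow> real \<times> real)) \<Rightarrow> real" where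
  "partial_jumps K t \<omega> = (\<Sum>p\<in>{..<K} \<times> {..<K}. cell_sum t (\<omega> p))"

lemma partial_jumps_measurable [measurable]:
  "partial_jumps K t \<in> borel_measurable (PiM UNIV (\<lambda>_::nat \<times> nat. cell_space))"
  unfolding partial_jumps_def by measurable

lemma partial_jumps_nonneg: "0 \<le> partial_jumps K t \<omega>"
  by (simp add: partial_jumps_def sum_nonneg cell_sum_nonneg)

lemma partial_jumps_mono_time: "t \<le> t' \<Longrightarrow> partial_jumps K t \<omega> \<le> partial_jumps K t' \<omega>"
  by (simp add: partial_jumps_def sum_mono cell_sum_mono)

lemma partial_jumps_mono: "K \<le> K' \<Longrightarrow> partial_jumps K t \<omega> \<le> partial_jumps K' t \<omega>"
  unfolding partial_jumps_def by (intro sum_mono2) (auto simp: cell_sum_nonneg)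

context levy_measure
begin

text \<open>Cell \<open>(j, k)\<close> carries the jumps of the subordinator at times in \<open>(j, j + 1]\<close> with sizes
  in band \<open>k\<close>: a Poisson number, of mean \<open>band_mass k\<close>, of independent (time, size) pairs.\<close>
definition cell_law :: "nat \<times> nat \<Rightarrow> (nat \<times> (nat \<Rightarrow> real \<times> real)) measure" where
  "cell_law p = poisson_measure (band_mass (snd p)) \<Otimes>\<^sub>M
     PiM UNIV (\<lambda>_::nat. unif_slot (fst p) \<Otimes>\<^sub>M band_law (snd p))"

definition jump_space :: "(nat \<times> nat \<Rightarrow> nat \<times> (nat \<Rightarrow> real \<times> real)) measure" where
  "jump_space = PiM UNIV cell_law"

lemma sets_jump_law: "sets (unif_slot j \<Otimes>\<^sub>M band_law k) = sets (borel \<Otimes>\<^sub>M borel)"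
  by (intro sets_pair_measure_cong) auto

lemma prob_space_jump_law: "prob_space (unif_slot j \<Otimes>\<^sub>M band_law k)"
  by (intro prob_space_pair prob_space_unif_slot prob_space_band_law)

lemma sets_cell_law: "sets (cell_law p) = sets cell_space"
  unfolding cell_law_def by (intro sets_pair_measure_cong sets_PiM_cong) (auto simp: sets_jump_law)

lemma prob_space_cell_law: "prob_space (cell_law p)"
  unfolding cell_law_def
  by (intro prob_space_pair prob_space_poisson_measure band_mass_nonneg prob_space_PiM
      prob_space_jump_law)

lemma sets_jump_space: "sets jump_space = sets (PiM UNIV (\<lambda>_::nat \<times> nat. cell_space))"
  unfolding jump_space_def by (intro sets_PiM_cong) (auto simp: sets_cell_law)

lemma prob_space_jump_space: "prob_space jump_space"
  unfolding jump_space_def by (intro prob_space_PiM prob_space_cell_law)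

lemma partial_jumps_measurable_jump_space [measurable]:
  "partial_jumps K t \<in> borel_measurable jump_space"
  by (simp add: measurable_cong_sets[OF sets_jump_space refl])

lemma nn_integral_cell_law_exp:
  assumes l: "0 < l"
  shows "(\<integral>\<^sup>+ x. ennreal (exp (- l * cell_sum t x)) \<partial>cell_law p)
       = ennreal (exp (- (clamp01 (t - real (fst p)) * band_exponent (snd p) l)))"
proof -
  obtain \<phi> where \<phi>: "0 \<le> \<phi>" "(\<integral>\<^sup>+ r. ennreal (exp (- l * max 0 r)) \<partial>band_law (snd p)) = ennreal \<phi>"
    "band_mass (snd p) * (1 - \<phi>) = band_exponent (snd p) l"
    using band_law_laplace[OF l] by blast
  define a where "a = clamp01 (t - real (fst p))"
  have "a * (1 - \<phi>) \<le> a * 1"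
    using clamp01_bounds \<phi>(1) by (intro mult_left_mono) (auto simp: a_def)
  then have \<psi>_nonneg: "0 \<le> 1 - a * (1 - \<phi>)"
    using clamp01_bounds[of "t - real (fst p)"] by (simp add: a_def)
  have \<psi>: "(\<integral>\<^sup>+ q. ennreal (exp (- l * jump_before t q)) \<partial>(unif_slot (fst p) \<Otimes>\<^sub>M band_law (snd p)))
      = ennreal (1 - a * (1 - \<phi>))"
    unfolding a_def by (rule nn_integral_jump_before_exp[OF prob_space_band_law sets_band_law \<phi>(2,1)])
  have "(\<integral>\<^sup>+ x. ennreal (exp (- l * cell_sum t x)) \<partial>cell_law p)
      = ennreal (exp (- band_mass (snd p) * (1 - (1 - a * (1 - \<phi>)))))"
    unfolding cell_law_def
    by (rule nn_integral_cell_sum_exp[OF band_mass_nonneg prob_space_jump_law sets_jump_law \<psi> \<psi>_nonneg])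
  also have "- band_mass (snd p) * (1 - (1 - a * (1 - \<phi>))) = - (a * (band_mass (snd p) * (1 - \<phi>)))"
    by (simp add: algebra_simps)
  finally show ?thesis by (simp add: a_def \<phi>(3))
qed

lemma nn_integral_partial_jumps_exp:
  assumes l: "0 < l" and t: "0 \<le> t"
  shows "(\<integral>\<^sup>+ \<omega>. ennreal (exp (- l * partial_jumps K t \<omega>)) \<partial>jump_space)
       = ennreal (exp (- (min t (real K) * (\<Sum>k<K. band_exponent k l))))"
proof -
  have "(\<integral>\<^sup>+ \<omega>. ennreal (exp (- l * partial_jumps K t \<omega>)) \<partial>jump_space)
      = (\<integral>\<^sup>+ \<omega>. (\<Prod>p\<in>{..<K} \<times> {..<K}. ennreal (exp (- l * cell_sum t (\<omega> p)))) \<partial>jump_space)"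
    by (intro nn_integral_cong) (simp add: partial_jumps_def sum_distrib_left exp_sum prod_ennreal)
  also have "\<dots> = (\<Prod>p\<in>{..<K} \<times> {..<K}. \<integral>\<^sup>+ x. ennreal (exp (- l * cell_sum t x)) \<partial>cell_law p)"
    unfolding jump_space_def
    by (rule nn_integral_PiM_prod)
      (auto simp: prob_space_cell_law measurable_cong_sets[OF sets_cell_law refl])
  also have "\<dots> = (\<Prod>p\<in>{..<K} \<times> {..<K}.
      ennreal (exp (- (clamp01 (t - real (fst p)) * band_exponent (snd p) l))))"
    by (intro prod.cong refl nn_integral_cell_law_exp l)
  also have "\<dots> = ennreal (exp (- (\<Sum>p\<in>{..<K} \<times> {..<K}. clamp01 (t - real (fst p)) * band_exponent (snd p) l)))"
    by (simp add: prod_ennreal exp_sum[symmetric] sum_negf)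
  also have "(\<Sum>p\<in>{..<K} \<times> {..<K}. clamp01 (t - real (fst p)) * band_exponent (snd p) l)
      = (\<Sum>j<K. clamp01 (t - real j)) * (\<Sum>k<K. band_exponent k l)"
    by (simp add: sum_product sum.cartesian_product case_prod_beta)
  also have "\<dots> = min t (real K) * (\<Sum>k<K. band_exponent k l)"
    by (simp add: sum_clamp01[OF t])
  finally show ?thesis .
qed

lemma partial_exponent_tendsto:
  assumes "0 < l"
  shows "(\<lambda>K. min t (real K) * (\<Sum>k<K. band_exponent k l)) \<longlonglongrightarrow> t * laplace_exponent l"
proof (intro tendsto_mult)
  have "\<forall>\<^sub>F K in sequentially. min t (real K) = t"
    using eventually_ge_at_top[of "nat \<lceil>t\<rceil>"] by eventually_elim linarith
  then show "(\<lambda>K. min t (real K)) \<longlonglongrightarrow> t" by (rule tendsto_eventually)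
  show "(\<lambda>K. \<Sum>k<K. band_exponent k l) \<longlonglongrightarrow> laplace_exponent l"
    using band_exponent_sums[OF assms] by (simp add: sums_def)
qed

end

locale bernstein_triple = levy_measure +
  fixes c \<gamma>0 :: real
  assumes c_nonneg: "0 \<le> c" and \<gamma>0_nonneg: "0 \<le> \<gamma>0"
begin

definition partial_below_event :: "nat \<Rightarrow> real \<Rightarrow> real \<Rightarrow> _ set" where
  "partial_below_event K t y = {\<omega>\<in>space jump_space. \<gamma>0 * t + partial_jumps K t \<omega> \<le> y}"

definition below_event :: "real \<Rightarrow> real \<Rightarrow> _ set" where
  "below_event t y = (\<Inter>K. partial_below_event K t y)"

text \<open>The probability that the subordinator with drift \<open>\<gamma>0\<close> and Levy measure \<open>\<nu>\<close>, killed at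
  rate \<open>c\<close>, is alive at time \<open>t\<close> and has not passed level \<open>y\<close>.\<close>
definition alive_below_prob :: "real \<Rightarrow> real \<Rightarrow> real" where
  "alive_below_prob t y = exp (- c * max 0 t) * measure jump_space (below_event t y)"

lemma partial_below_event_sets [measurable]: "partial_below_event K t y \<in> sets jump_space"
  unfolding partial_below_event_def by measurable

lemma below_event_sets [measurable]: "below_event t y \<in> sets jump_space"
  unfolding below_event_def by (intro sets.countable_INT) auto

lemma partial_below_event_mono: "y \<le> y' \<Longrightarrow> partial_below_event K t y \<subseteq> partial_below_event K t y'"
  by (auto simp: partial_below_event_def)

lemma partial_below_event_antimono:
  assumes "K \<le> K'"
  shows "partial_below_event K' t y \<subseteq> partial_below_event K t y"
proof
  fix \<omega> assume "\<omega> \<in> partial_below_event K' t y"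
  moreover have "partial_jumps K t \<omega> \<le> partial_jumps K' t \<omega>"
    by (rule partial_jumps_mono[OF assms])
  ultimately show "\<omega> \<in> partial_below_event K t y"
    by (auto simp: partial_below_event_def)
qed

lemma below_event_mono: "y \<le> y' \<Longrightarrow> below_event t y \<subseteq> below_event t y'"
  unfolding below_event_def using partial_below_event_mono by blast

lemma below_event_antimono_time: "0 \<le> t \<Longrightarrow> t \<le> t' \<Longrightarrow> below_event t' y \<subseteq> below_event t y"
proof -
  assume t: "0 \<le> t" "t \<le> t'"
  have "\<gamma>0 * t + partial_jumps K t \<omega> \<le> \<gamma>0 * t' + partial_jumps K t' \<omega>" for K \<omega>
    using t \<gamma>0_nonneg partial_jumps_mono_time[OF t(2)] by (intro add_mono mult_left_mono) auto
  then show ?thesis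
    unfolding below_event_def partial_below_event_def by (auto intro: order_trans)
qed

lemma alive_below_prob_bounds: "0 \<le> alive_below_prob t y" "alive_below_prob t y \<le> 1"
proof -
  interpret prob_space jump_space by (rule prob_space_jump_space)
  show "0 \<le> alive_below_prob t y" by (simp add: alive_below_prob_def)
  have "exp (- c * max 0 t) \<le> 1" using c_nonneg by simp
  then show "alive_below_prob t y \<le> 1" unfolding alive_below_prob_def by (intro mult_le_one) auto
qed

lemma alive_below_prob_mono: "y \<le> y' \<Longrightarrow> alive_below_prob t y \<le> alive_below_prob t y'"
proof -
  interpret prob_space jump_space by (rule prob_space_jump_space)
  assume "y \<le> y'"
  then have "prob (below_event t y) \<le> prob (below_event t y')"
    by (intro finite_measure_mono below_event_mono) auto
  then show ?thesis unfolding alive_below_prob_def by (intro mult_left_mono) auto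
qed

lemma alive_below_prob_antimono: "0 \<le> t \<Longrightarrow> t \<le> t' \<Longrightarrow> alive_below_prob t' y \<le> alive_below_prob t y"
proof -
  interpret prob_space jump_space by (rule prob_space_jump_space)
  assume t: "0 \<le> t" "t \<le> t'"
  then have "prob (below_event t' y) \<le> prob (below_event t y)"
    by (intro finite_measure_mono below_event_antimono_time) auto
  moreover have "exp (- c * max 0 t') \<le> exp (- c * max 0 t)"
    using t c_nonneg by (simp add: mult_left_mono)
  ultimately show ?thesis unfolding alive_below_prob_def by (intro mult_mono) auto
qed

lemma emeasure_partial_below_event_measurable:
  "(\<lambda>y. emeasure jump_space (partial_below_event K t y)) \<in> borel_measurable borel"
proof -
  interpret prob_space jump_space by (rule prob_space_jump_space)
  have "mono (\<lambda>y. prob (partial_below_event K t y))"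
    by (auto simp: mono_def intro!: finite_measure_mono partial_below_event_mono)
  then show ?thesis by (simp add: emeasure_eq_measure borel_measurable_mono)
qed

lemma nn_integral_partial_below_event:
  assumes l: "0 < l" and t: "0 \<le> t"
  shows "(\<integral>\<^sup>+ y. emeasure jump_space (partial_below_event K t y) \<partial>Exp_measure l)
       = ennreal (exp (- (l * \<gamma>0 * t + min t (real K) * (\<Sum>k<K. band_exponent k l))))"
proof -
  have "(\<integral>\<^sup>+ y. emeasure jump_space (partial_below_event K t y) \<partial>Exp_measure l)
      = (\<integral>\<^sup>+ \<omega>. ennreal (exp (- l * (\<gamma>0 * t + partial_jumps K t \<omega>))) \<partial>jump_space)"
    unfolding partial_below_event_def using \<gamma>0_nonneg t
    by (intro nn_integral_Exp_measure_emeasure_le prob_space_jump_space l)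
      (auto intro!: add_nonneg_nonneg partial_jumps_nonneg)
  also have "\<dots> = (\<integral>\<^sup>+ \<omega>. ennreal (exp (- l * \<gamma>0 * t)) * ennreal (exp (- l * partial_jumps K t \<omega>)) \<partial>jump_space)"
    by (intro nn_integral_cong) (simp add: ennreal_mult[symmetric] exp_add[symmetric] algebra_simps)
  also have "\<dots> = ennreal (exp (- l * \<gamma>0 * t)) * (\<integral>\<^sup>+ \<omega>. ennreal (exp (- l * partial_jumps K t \<omega>)) \<partial>jump_space)"
    by (rule nn_integral_cmult) measurable
  finally show ?thesis
    unfolding nn_integral_partial_jumps_exp[OF l t]
    by (simp add: ennreal_mult[symmetric] exp_add[symmetric] algebra_simps)
qed

lemma nn_integral_below_event:
  assumes l: "0 < l" and t: "0 \<le> t"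
  shows "(\<integral>\<^sup>+ y. emeasure jump_space (below_event t y) \<partial>Exp_measure l)
       = ennreal (exp (- (l * \<gamma>0 * t + t * laplace_exponent l)))"
proof -
  interpret prob_space jump_space by (rule prob_space_jump_space)
  interpret E: prob_space "Exp_measure l" by (rule prob_space_Exp_measure[OF l])
  let ?a = "\<lambda>K. l * \<gamma>0 * t + min t (real K) * (\<Sum>k<K. band_exponent k l)"
  have "(\<integral>\<^sup>+ y. emeasure jump_space (below_event t y) \<partial>Exp_measure l)
      = (\<integral>\<^sup>+ y. (INF K. emeasure jump_space (partial_below_event K t y)) \<partial>Exp_measure l)"
    unfolding below_event_def
    by (intro nn_integral_cong INF_emeasure_decseq[symmetric])
      (auto simp: decseq_def partial_below_event_antimono)
  also have "\<dots> = (INF K. \<integral>\<^sup>+ y. emeasure jump_space (partial_below_event K t y) \<partial>Exp_measure l)"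
  proof (rule nn_integral_monotone_convergence_INF_decseq)
    show "decseq (\<lambda>K y. emeasure jump_space (partial_below_event K t y))"
    proof (rule decseq_SucI, rule le_funI)
      show "emeasure jump_space (partial_below_event (Suc K) t y)
          \<le> emeasure jump_space (partial_below_event K t y)" for K y
        by (rule emeasure_mono[OF partial_below_event_antimono]) auto
    qed
    have "(\<integral>\<^sup>+ y. emeasure jump_space (partial_below_event 0 t y) \<partial>Exp_measure l) \<le> (\<integral>\<^sup>+ y. 1 \<partial>Exp_measure l)"
      by (intro nn_integral_mono) (simp add: emeasure_le_1)
    then show "(\<integral>\<^sup>+ y. emeasure jump_space (partial_below_event 0 t y) \<partial>Exp_measure l) < \<infinity>"
      using E.emeasure_space_1 by (simp add: le_less_trans)
  qed (simp add: emeasure_partial_below_event_measurable cong: measurable_cong_sets)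
  also have "\<dots> = (INF K. ennreal (exp (- ?a K)))"
    by (simp add: nn_integral_partial_below_event l t)
  also have "\<dots> = ennreal (exp (- (l * \<gamma>0 * t + t * laplace_exponent l)))"
  proof (rule LIMSEQ_unique)
    have "?a K \<le> ?a K'" if "K \<le> K'" for K K'
      using that t
      by (intro add_left_mono mult_mono sum_mono2)
        (auto intro: sum_nonneg band_exponent_nonneg)
    then have "decseq (\<lambda>K. ennreal (exp (- ?a K)))"
      by (auto simp: decseq_def intro!: ennreal_leI)
    then show "(\<lambda>K. ennreal (exp (- ?a K))) \<longlonglongrightarrow> (INF K. ennreal (exp (- ?a K)))"
      by (rule LIMSEQ_INF)
    show "(\<lambda>K. ennreal (exp (- ?a K))) \<longlonglongrightarrow> ennreal (exp (- (l * \<gamma>0 * t + t * laplace_exponent l)))"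
      by (intro tendsto_ennrealI tendsto_intros partial_exponent_tendsto l)
  qed
  finally show ?thesis .
qed

lemma nn_integral_alive_below_prob:
  assumes l: "0 < l" and t: "0 \<le> t"
  shows "(\<integral>\<^sup>+ y. ennreal (alive_below_prob t y) \<partial>Exp_measure l) = ennreal (exp (- t * G_fun c \<gamma>0 \<nu> l))"
proof -
  interpret prob_space jump_space by (rule prob_space_jump_space)
  have "(\<integral>\<^sup>+ y. ennreal (alive_below_prob t y) \<partial>Exp_measure l)
      = (\<integral>\<^sup>+ y. ennreal (exp (- c * t)) * emeasure jump_space (below_event t y) \<partial>Exp_measure l)"
    using t by (intro nn_integral_cong) (simp add: alive_below_prob_def ennreal_mult emeasure_eq_measure)
  also have "\<dots> = ennreal (exp (- c * t)) * (\<integral>\<^sup>+ y. emeasure jump_space (below_event t y) \<partial>Exp_measure l)"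
  proof (rule nn_integral_cmult)
    have "mono (\<lambda>y. prob (below_event t y))"
      by (auto simp: mono_def intro!: finite_measure_mono below_event_mono)
    then show "(\<lambda>y. emeasure jump_space (below_event t y)) \<in> borel_measurable (Exp_measure l)"
      by (simp add: emeasure_eq_measure borel_measurable_mono cong: measurable_cong_sets)
  qed
  also have "\<dots> = ennreal (exp (- t * G_fun c \<gamma>0 \<nu> l))"
    using l by (simp add: nn_integral_below_event t G_fun_def laplace_exponent_def
        ennreal_mult[symmetric] exp_add[symmetric] algebra_simps)
  finally show ?thesis .
qed

end

theorem mainTheorem1:
  fixes c \<gamma>0 :: real and \<nu> :: "real measure"
  assumes "c \<ge> 0" and "\<gamma>0 \<ge> 0"
    and "sets \<nu> = sets borel"
    and "emeasure \<nu> {..0} = 0"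
    and "(\<integral>\<^sup>+ r. ennreal (min r 1) \<partial>\<nu>) < \<infinity>"
  shows "\<exists>L :: real \<Rightarrow> real \<Rightarrow> real.
           (\<forall>a\<in>{0<..}. \<forall>b\<in>{0<..<1}. L a b \<ge> 0) \<and>
           (\<forall>a a' b b'. a \<in> {0<..} \<longrightarrow> a' \<in> {0<..} \<longrightarrow> b \<in> {0<..<1} \<longrightarrow> b' \<in> {0<..<1} \<longrightarrow>
               a \<le> a' \<longrightarrow> b \<le> b' \<longrightarrow> L a b \<le> L a' b') \<and>
           (\<forall>lam>0. G_fun c \<gamma>0 \<nu> lam > 0 \<longrightarrow>
               distr (Exp_measure lam \<Otimes>\<^sub>M Unif01) borel (\<lambda>(y, u). L y u)
                 = Exp_measure (G_fun c \<gamma>0 \<nu> lam))"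
proof (cases "\<exists>l0>0. G_fun c \<gamma>0 \<nu> l0 > 0")
  case True
  then obtain l0 where l0: "0 < l0" "0 < G_fun c \<gamma>0 \<nu> l0" by blast
  interpret bernstein_triple \<nu> c \<gamma>0
    using assms by unfold_locales
  interpret laplace_kernel alive_below_prob "G_fun c \<gamma>0 \<nu>" l0
    using l0 alive_below_prob_bounds alive_below_prob_mono alive_below_prob_antimono
      nn_integral_alive_below_prob
    by unfold_locales
  show ?thesis
    by (intro exI[of _ ell]) (auto simp: ell_nonneg ell_mono distr_ell)
next
  case False
  then show ?thesis by (intro exI[of _ "\<lambda>_ _. 0"]) auto
qed

end
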